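(* Fix positive integers $M\le N$ and $K$, and constants $T>0$, $\alpha_0>0$, $\eta\in(0,1]$, $m>0$, $p_{\max}>0$, $\Pr_{out,0}>0$, $q\ge 0$, $c_{ij}>0$ and $c_j>0$ for $i\in\{1,\dots,M\}$, $j\in\Theta:=\{1,\dots,N\}$, and $Eu_{i,k}\ge 0$ for $i\in\{1,\dots,M\}$, $k\in\{1,\dots,K\}$. The optimization variables are the real numbers $\tilde p_{i,k}$ ($1\le i\le M$, $1\le k\le K$), $\tilde p'_{j,k}$ ($j\in\Theta$, $1\le k\le K$) and $E_{i\to i',k}$ ($i\neq i'$ in $\{1,\dots,M\}$, $1\le k\le K$). For each $k$ define $$\Pr\{A_k\}=\sum_{n=0}^{M-1}\ \sum_{\Phi\subseteq\Theta,\,|\Phi|=n}\ \prod_{j\in\Theta\setminus\Phi}\Big(\sum_{i=1}^M c_{ij}e^{-m\tilde p_{i,k}}\Big),$$ $$\Pr\{B_k\}=\sum_{n=M}^{N}\ \sum_{\Phi\subseteq\Theta,\,|\Phi|=n}\left[\prod_{j\in\Theta\setminus\Phi}\Big(\sum_{i=1}^M c_{ij}e^{-m\tilde p_{i,k}}\Big)\right]\cdot\left[\sum_{\tau=0}^{M-1}\ \sum_{\psi\subseteq\Phi,\,|\psi|=\tau}\ \prod_{j\in\Phi\setminus\psi} c_j e^{-m\tilde p'_{j,k}}\right],$$ (empty products equal $1$), and $\Pr_{out,k}=\Pr\{A_k\}+\Pr\{B_k\}$. Let $$V'=M\alpha_0T\sum_{k=1}^K\Pr_{out,k}+q\sum_{k=1}^K\Big(\sum_{i=1}^M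 Te^{\tilde p_{i,k}}+(1-\eta)\sum_{i=1}^M\sum_{i'\neq i}E_{i\to i',k}+\sum_{j=1}^N Te^{\tilde p'_{j,k}}\Big).$$ Consider the problem P3: minimize $V'$ subject to, for all $i,j,k$: (i) $\Pr_{out,k}\le \Pr_{out,0}$; (ii) the energy causality constraint $$\sum_{l=1}^k Te^{\tilde p_{i,l}}+\sum_{l=1}^k\sum_{i'\neq i}E_{i\to i',l}-\eta\sum_{l=1}^k\sum_{i'\neq i}E_{i'\to i,l}\le\sum_{l=1}^k Eu_{i,l};$$ (iii) $e^{\tilde p_{i,k}}\le p_{\max}$ and $e^{\tilde p'_{j,k}}\le p_{\max}$; (iv) $E_{i\to i',k}\ge 0$. Then P3 is a convex optimization problem: $V'$ is a jointly convex function of all variables $(\tilde p_{i,k},\tilde p'_{j,k},E_{i\to i',k})$, and the feasible set defined by (i)–(iv) is convex.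
   Context: Setting: $M$ energy-harvesting users transmit to a destination via $N$ network-coding relays over $K$ transmission periods; $p_{i,k}=e^{\tilde p_{i,k}}$ is the transmit power of user $i$ in period $k$, $p'_{j,k}=e^{\tilde p'_{j,k}}$ the transmit power of relay $j$, and $E_{i\to i',k}\ge0$ the energy user $i$ transfers wirelessly to user $i'$ in period $k$ with transfer efficiency $\eta$. The constants $c_{ij}$, $c_j$ collect channel parameters so that single-link outage probabilities are approximated by $c_{ij}p_{i,k}^{-m}$ and $c_j(p'_{j,k})^{-m}$ (Nakagami-$m$ fading parameter $m$); $\Pr_{out,k}$ above is the resulting approximation of the network outage probability in period $k$. $Eu_{i,k}$ is the energy harvested by user $i$ available from period $k$ on, and $q$ is the fixed Dinkelbach parameter (current energy-efficiency estimate). *)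

theory Defs
  imports "HOL-Analysis.Analysis"
begin

text \<open>Optimization variables: (pt, pr, E) with pt i k = tilde p_{i,k},
  pr j k = tilde p'_{j,k}, E i i' k = E_{i -> i', k}.  Only indices in range matter.\<close>
type_synonym vars = "(nat \<Rightarrow> nat \<Rightarrow> real) \<times> (nat \<Rightarrow> nat \<Rightarrow> real) \<times> (nat \<Rightarrow> nat \<Rightarrow> nat \<Rightarrow> real)"

definition vcomb :: "real \<Rightarrow> vars \<Rightarrow> vars \<Rightarrow> vars" where
  "vcomb t x y =
     (case x of (p1, r1, E1) \<Rightarrow> case y of (p2, r2, E2) \<Rightarrow>
       ((\<lambda>i k. (1 - t) * p1 i k + t * p2 i k),
        (\<lambda>j k. (1 - t) * r1 j k + t * r2 j k),
        (\<lambda>i i' k. (1 - t) * E1 i i' k + t * E2 i i' k)))"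

definition convex_fun_vars :: "(vars \<Rightarrow> real) \<Rightarrow> bool" where
  "convex_fun_vars f \<longleftrightarrow>
     (\<forall>x y t. 0 \<le> t \<and> t \<le> 1 \<longrightarrow> f (vcomb t x y) \<le> (1 - t) * f x + t * f y)"

definition convex_set_vars :: "vars set \<Rightarrow> bool" where
  "convex_set_vars S \<longleftrightarrow>
     (\<forall>x\<in>S. \<forall>y\<in>S. \<forall>t. 0 \<le> t \<and> t \<le> 1 \<longrightarrow> vcomb t x y \<in> S)"

definition PrA :: "nat \<Rightarrow> nat \<Rightarrow> real \<Rightarrow> (nat \<Rightarrow> nat \<Rightarrow> real) \<Rightarrow> (nat \<Rightarrow> nat \<Rightarrow> real) \<Rightarrow> nat \<Rightarrow> real" where
  "PrA M N m c pt k =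
     (\<Sum>n\<in>{0..<M}. \<Sum>\<Phi>\<in>{\<Phi>. \<Phi> \<subseteq> {1..N} \<and> card \<Phi> = n}.
        \<Prod>j\<in>{1..N} - \<Phi>. (\<Sum>i=1..M. c i j * exp (- m * pt i k)))"

definition PrB :: "nat \<Rightarrow> nat \<Rightarrow> real \<Rightarrow> (nat \<Rightarrow> nat \<Rightarrow> real) \<Rightarrow> (nat \<Rightarrow> real)
    \<Rightarrow> (nat \<Rightarrow> nat \<Rightarrow> real) \<Rightarrow> (nat \<Rightarrow> nat \<Rightarrow> real) \<Rightarrow> nat \<Rightarrow> real" where
  "PrB M N m c cr pt pr k =
     (\<Sum>n\<in>{M..N}. \<Sum>\<Phi>\<in>{\<Phi>. \<Phi> \<subseteq> {1..N} \<and> card \<Phi> = n}.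
        (\<Prod>j\<in>{1..N} - \<Phi>. (\<Sum>i=1..M. c i j * exp (- m * pt i k))) *
        (\<Sum>\<tau>\<in>{0..<M}. \<Sum>\<psi>\<in>{\<psi>. \<psi> \<subseteq> \<Phi> \<and> card \<psi> = \<tau>}.
           \<Prod>j\<in>\<Phi> - \<psi>. cr j * exp (- m * pr j k)))"

definition Prout :: "nat \<Rightarrow> nat \<Rightarrow> real \<Rightarrow> (nat \<Rightarrow> nat \<Rightarrow> real) \<Rightarrow> (nat \<Rightarrow> real)
    \<Rightarrow> (nat \<Rightarrow> nat \<Rightarrow> real) \<Rightarrow> (nat \<Rightarrow> nat \<Rightarrow> real) \<Rightarrow> nat \<Rightarrow> real" where
  "Prout M N m c cr pt pr k = PrA M N m c pt k + PrB M N m c cr pt pr k"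

definition Vobj :: "nat \<Rightarrow> nat \<Rightarrow> nat \<Rightarrow> real \<Rightarrow> real \<Rightarrow> real \<Rightarrow> real \<Rightarrow> real
    \<Rightarrow> (nat \<Rightarrow> nat \<Rightarrow> real) \<Rightarrow> (nat \<Rightarrow> real) \<Rightarrow> vars \<Rightarrow> real" where
  "Vobj M N K T \<alpha>0 \<eta> m q c cr v =
     (case v of (pt, pr, E) \<Rightarrow>
        real M * \<alpha>0 * T * (\<Sum>k=1..K. Prout M N m c cr pt pr k)
        + q * (\<Sum>k=1..K. (\<Sum>i=1..M. T * exp (pt i k))
              + (1 - \<eta>) * (\<Sum>i=1..M. \<Sum>i'\<in>{1..M} - {i}. E i i' k)
              + (\<Sum>j=1..N. T * exp (pr j k))))"

definition feasible :: "nat \<Rightarrow> nat \<Rightarrow> nat \<Rightarrow> real \<Rightarrow> real \<Rightarrow> real \<Rightarrow> real \<Rightarrow> real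
    \<Rightarrow> (nat \<Rightarrow> nat \<Rightarrow> real) \<Rightarrow> (nat \<Rightarrow> real) \<Rightarrow> (nat \<Rightarrow> nat \<Rightarrow> real) \<Rightarrow> vars set" where
  "feasible M N K T \<eta> m pmax Pr0 c cr Eu =
     {(pt, pr, E). \<forall>k\<in>{1..K}.
        Prout M N m c cr pt pr k \<le> Pr0
      \<and> (\<forall>i\<in>{1..M}.
           (\<Sum>l=1..k. T * exp (pt i l)) + (\<Sum>l=1..k. \<Sum>i'\<in>{1..M} - {i}. E i i' l)
             - \<eta> * (\<Sum>l=1..k. \<Sum>i'\<in>{1..M} - {i}. E i' i l)
           \<le> (\<Sum>l=1..k. Eu i l))
      \<and> (\<forall>i\<in>{1..M}. exp (pt i k) \<le> pmax)
      \<and> (\<forall>j\<in>{1..N}. exp (pr j k) \<le> pmax)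
      \<and> (\<forall>i\<in>{1..M}. \<forall>i'\<in>{1..M}. i \<noteq> i' \<longrightarrow> 0 \<le> E i i' k)}"

end

(*
  The outage probability is a posynomial in the quantities e^{-m p}: sums and products of
  nonnegative constants times exponentials of affine functions of the variables.  Such
  functions are log-convex, because log-convexity is preserved by products (trivially) and
  by sums (Hoelder's inequality), and log-convex functions are convex.  The remaining
  terms of V' and of the constraints are exponentials of affine functions or linear, so
  V' is convex and the feasible set is an intersection of sublevel sets of convex
  functions.  Convexity in the variable tuple reduces to convexity in t of the restriction
  of each function to every segment t \<mapsto> (1 - t) x + t y, 0 \<le> t \<le> 1.
*)
theory Submission
  imports Defs
begin

lemma weighted_am_gm:
  fixes a b t :: real
  assumes "0 \<le> a" "0 \<le> b" "0 \<le> t" "t \<le> 1"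
  shows "a powr (1 - t) * b powr t \<le> (1 - t) * a + t * b"
proof (cases "a = 0 \<or> b = 0")
  case True
  then show ?thesis
    using assms by auto
next
  case False
  then show ?thesis
    using assms Youngs_inequality_0[of "1 - t" t a b] by auto
qed

lemma Holder_inequality_two_terms:
  fixes a b c d t :: real
  assumes "0 \<le> a" "0 \<le> b" "0 \<le> c" "0 \<le> d" "0 \<le> t" "t \<le> 1"
  shows "a powr (1 - t) * b powr t + c powr (1 - t) * d powr t \<le> (a + c) powr (1 - t) * (b + d) powr t"
proof (cases "a + c = 0 \<or> b + d = 0")
  case True
  then have "(a = 0 \<and> c = 0) \<or> (b = 0 \<and> d = 0)"
    using assms by linarith
  then show ?thesis
    using assms by auto
next
  case False
  define A B where "A = a + c" and "B = b + d"
  have "A > 0" "B > 0"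
    using False assms by (auto simp: A_def B_def)
  \<comment> \<open>normalise both pairs to total mass one and apply AM-GM to each summand\<close>
  have "(a/A) powr (1 - t) * (b/B) powr t + (c/A) powr (1 - t) * (d/B) powr t
      \<le> ((1 - t) * (a/A) + t * (b/B)) + ((1 - t) * (c/A) + t * (d/B))"
    using assms \<open>A > 0\<close> \<open>B > 0\<close> by (intro add_mono weighted_am_gm) auto
  also have "\<dots> = (1 - t) * ((a + c) / A) + t * ((b + d) / B)"
    by (simp add: add_divide_distrib algebra_simps)
  also have "\<dots> = 1"
    using \<open>A > 0\<close> \<open>B > 0\<close> by (simp add: A_def B_def)
  finally have "(a/A) powr (1 - t) * (b/B) powr t + (c/A) powr (1 - t) * (d/B) powr t \<le> 1" .
  then have "A powr (1 - t) * B powr t * ((a/A) powr (1 - t) * (b/B) powr t + (c/A) powr (1 - t) * (d/B) powr t)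
      \<le> A powr (1 - t) * B powr t"
    by (simp add: mult_left_le)
  then show ?thesis
    using assms \<open>A > 0\<close> \<open>B > 0\<close> by (simp add: powr_divide algebra_simps A_def B_def)
qed

text \<open>Zero values are allowed: with \<open>0 powr t = 0\<close> this is convexity of \<open>ln \<circ> f\<close>
  read with \<open>ln 0 = -\<infinity>\<close>.\<close>

definition log_convex_on :: "'a::real_vector set \<Rightarrow> ('a \<Rightarrow> real) \<Rightarrow> bool" where
  "log_convex_on S f \<longleftrightarrow> convex S \<and> (\<forall>x\<in>S. 0 \<le> f x) \<and>
     (\<forall>x\<in>S. \<forall>y\<in>S. \<forall>t. 0 \<le> t \<and> t \<le> 1 \<longrightarrow>
        f ((1 - t) *\<^sub>R x + t *\<^sub>R y) \<le> f x powr (1 - t) * f y powr t)"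

lemma log_convex_onI:
  assumes "convex S" "\<And>x. x \<in> S \<Longrightarrow> 0 \<le> f x"
    and "\<And>x y t. x \<in> S \<Longrightarrow> y \<in> S \<Longrightarrow> 0 \<le> t \<Longrightarrow> t \<le> 1 \<Longrightarrow>
           f ((1 - t) *\<^sub>R x + t *\<^sub>R y) \<le> f x powr (1 - t) * f y powr t"
  shows "log_convex_on S f"
  using assms unfolding log_convex_on_def by blast

lemma log_convex_onD:
  assumes "log_convex_on S f"
  shows "convex S" "x \<in> S \<Longrightarrow> 0 \<le> f x"
    and "x \<in> S \<Longrightarrow> y \<in> S \<Longrightarrow> 0 \<le> t \<Longrightarrow> t \<le> 1 \<Longrightarrow>
           f ((1 - t) *\<^sub>R x + t *\<^sub>R y) \<le> f x powr (1 - t) * f y powr t"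
  using assms unfolding log_convex_on_def by blast+

lemma log_convex_on_imp_convex_on:
  assumes "log_convex_on S f"
  shows "convex_on S f"
proof (rule convex_onI)
  fix x y and t :: real
  assume "0 < t" "t < 1" "x \<in> S" "y \<in> S"
  then have "f ((1 - t) *\<^sub>R x + t *\<^sub>R y) \<le> f x powr (1 - t) * f y powr t"
    by (intro log_convex_onD(3)[OF assms]) auto
  also have "\<dots> \<le> (1 - t) * f x + t * f y"
    using \<open>0 < t\<close> \<open>t < 1\<close> \<open>x \<in> S\<close> \<open>y \<in> S\<close>
    by (intro weighted_am_gm log_convex_onD(2)[OF assms]) auto
  finally show "f ((1 - t) *\<^sub>R x + t *\<^sub>R y) \<le> (1 - t) * f x + t * f y" .
qed (rule log_convex_onD(1)[OF assms])

lemma log_convex_on_const: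
  assumes "convex S" "0 \<le> a"
  shows "log_convex_on S (\<lambda>x. a)"
proof (rule log_convex_onI)
  show "a \<le> a powr (1 - t) * a powr t" for t
    using assms by (cases "a = 0") (simp_all flip: powr_add)
qed (use assms in auto)

lemma log_convex_on_exp:
  assumes "convex_on S f"
  shows "log_convex_on S (\<lambda>x. exp (f x))"
proof (rule log_convex_onI)
  fix x y and t :: real
  assume "x \<in> S" "y \<in> S" "0 \<le> t" "t \<le> 1"
  then have "exp (f ((1 - t) *\<^sub>R x + t *\<^sub>R y)) \<le> exp ((1 - t) * f x + t * f y)"
    using convex_onD[OF assms] by simp
  then show "exp (f ((1 - t) *\<^sub>R x + t *\<^sub>R y)) \<le> exp (f x) powr (1 - t) * exp (f y) powr t"
    by (simp add: powr_def exp_add)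
qed (use convex_on_imp_convex[OF assms] in auto)

lemma log_convex_on_mult:
  assumes f: "log_convex_on S f" and g: "log_convex_on S g"
  shows "log_convex_on S (\<lambda>x. f x * g x)"
proof (rule log_convex_onI)
  fix x y and t :: real
  assume xy: "x \<in> S" "y \<in> S" and t: "0 \<le> t" "t \<le> 1"
  let ?z = "(1 - t) *\<^sub>R x + t *\<^sub>R y"
  have "f ?z * g ?z \<le> (f x powr (1 - t) * f y powr t) * (g x powr (1 - t) * g y powr t)"
    using xy t log_convex_onD[OF f] log_convex_onD[OF g]
    by (intro mult_mono) (auto simp: convex_alt)
  also have "\<dots> = (f x * g x) powr (1 - t) * (f y * g y) powr t"
    using xy log_convex_onD(2)[OF f] log_convex_onD(2)[OF g] by (simp add: powr_mult)
  finally show "f ?z * g ?z \<le> (f x * g x) powr (1 - t) * (f y * g y) powr t" .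
qed (use log_convex_onD[OF f] log_convex_onD[OF g] in auto)

lemma log_convex_on_add:
  assumes f: "log_convex_on S f" and g: "log_convex_on S g"
  shows "log_convex_on S (\<lambda>x. f x + g x)"
proof (rule log_convex_onI)
  fix x y and t :: real
  assume xy: "x \<in> S" "y \<in> S" and t: "0 \<le> t" "t \<le> 1"
  let ?z = "(1 - t) *\<^sub>R x + t *\<^sub>R y"
  have "f ?z + g ?z \<le> f x powr (1 - t) * f y powr t + g x powr (1 - t) * g y powr t"
    using xy t log_convex_onD[OF f] log_convex_onD[OF g] by (intro add_mono) auto
  also have "\<dots> \<le> (f x + g x) powr (1 - t) * (f y + g y) powr t"
    using xy t log_convex_onD(2)[OF f] log_convex_onD(2)[OF g]
    by (intro Holder_inequality_two_terms) auto
  finally show "f ?z + g ?z \<le> (f x + g x) powr (1 - t) * (f y + g y) powr t" .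
qed (use log_convex_onD[OF f] log_convex_onD[OF g] in auto)

lemma log_convex_on_sum:
  assumes "convex S" "\<And>a. a \<in> A \<Longrightarrow> log_convex_on S (f a)"
  shows "log_convex_on S (\<lambda>x. \<Sum>a\<in>A. f a x)"
  using assms(2)
  by (induction A rule: infinite_finite_induct)
     (simp_all add: log_convex_on_const log_convex_on_add assms(1))

lemma log_convex_on_prod:
  assumes "convex S" "\<And>a. a \<in> A \<Longrightarrow> log_convex_on S (f a)"
  shows "log_convex_on S (\<lambda>x. \<Prod>a\<in>A. f a x)"
  using assms(2)
  by (induction A rule: infinite_finite_induct)
     (simp_all add: log_convex_on_const log_convex_on_mult assms(1))

lemma convex_on_sum_fun:
  assumes "convex S" "\<And>a. a \<in> A \<Longrightarrow> convex_on S (f a)"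
  shows "convex_on S (\<lambda>x. \<Sum>a\<in>A. f a x)"
  using assms(2)
  by (induction A rule: infinite_finite_induct) (auto simp: convex_on_const assms(1))

lemma concave_on_sum_fun:
  assumes "convex S" "\<And>a. a \<in> A \<Longrightarrow> concave_on S (f a)"
  shows "concave_on S (\<lambda>x. \<Sum>a\<in>A. f a x)"
  using convex_on_sum_fun[of S A "\<lambda>a x. - f a x"] assms
  by (simp add: concave_on_def sum_negf)

lemma convex_on_neg_mult:
  assumes "0 \<le> m" "concave_on S f"
  shows "convex_on S (\<lambda>x. - m * f x)"
  using convex_on_cmul[OF assms(1), of S "\<lambda>x. - f x"] assms(2)
  by (simp add: concave_on_def)

lemma
  fixes a b :: real
  assumes "convex S"
  shows convex_on_interpolation: "convex_on S (\<lambda>t. (1 - t) * a + t * b)"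
    and concave_on_interpolation: "concave_on S (\<lambda>t. (1 - t) * a + t * b)"
  using assms
  by (auto simp: convex_on_def concave_on_iff algebra_simps simp flip: distrib_right)

lemma log_convex_on_Prout:
  assumes "0 \<le> m"
    and c: "\<And>i j. i \<in> {1..M} \<Longrightarrow> j \<in> {1..N} \<Longrightarrow> 0 \<le> c i j"
    and cr: "\<And>j. j \<in> {1..N} \<Longrightarrow> 0 \<le> cr j"
    and P: "\<And>i k. concave_on S (\<lambda>x. P x i k)"
    and R: "\<And>j k. concave_on S (\<lambda>x. R x j k)"
  shows "log_convex_on S (\<lambda>x. Prout M N m c cr (P x) (R x) k)"
proof -
  have S: "convex S"
    using concave_on_imp_convex[OF P] .
  show ?thesis
    unfolding Prout_def PrA_def PrB_def
    by (intro log_convex_on_add log_convex_on_sum log_convex_on_prod log_convex_on_mult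
          log_convex_on_const log_convex_on_exp convex_on_neg_mult S P R \<open>0 \<le> m\<close>)
       (auto intro: c cr simp: subset_iff)
qed

lemma vcomb_0 [simp]: "vcomb 0 x y = x"
  and vcomb_1 [simp]: "vcomb 1 x y = y"
  by (cases x; cases y; simp add: vcomb_def)+

lemma convex_fun_varsI:
  assumes "\<And>p1 r1 E1 p2 r2 E2. convex_on {0..1} (\<lambda>t. f (vcomb t (p1, r1, E1) (p2, r2, E2)))"
  shows "convex_fun_vars f"
  unfolding convex_fun_vars_def
proof (intro allI impI)
  fix x y :: vars and t :: real
  assume t: "0 \<le> t \<and> t \<le> 1"
  obtain p1 r1 E1 p2 r2 E2 where "x = (p1, r1, E1)" "y = (p2, r2, E2)"
    by (cases x, cases y) auto
  then show "f (vcomb t x y) \<le> (1 - t) * f x + t * f y"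
    using convex_onD[OF assms[of p1 r1 E1 p2 r2 E2], of t 0 1] t by simp
qed

lemma convex_set_vars_sublevel:
  assumes "convex_fun_vars g"
  shows "convex_set_vars {v. g v \<le> b}"
  unfolding convex_set_vars_def
proof (intro ballI allI impI)
  fix x y and t :: real
  assume "x \<in> {v. g v \<le> b}" "y \<in> {v. g v \<le> b}" and t: "0 \<le> t \<and> t \<le> 1"
  then have "(1 - t) * g x + t * g y \<le> (1 - t) * b + t * b"
    by (intro add_mono mult_left_mono) auto
  moreover have "g (vcomb t x y) \<le> (1 - t) * g x + t * g y"
    using assms t unfolding convex_fun_vars_def by blast
  ultimately show "vcomb t x y \<in> {v. g v \<le> b}"
    by (simp add: algebra_simps)
qed

lemma convex_set_vars_Int:
  "convex_set_vars A \<Longrightarrow> convex_set_vars B \<Longrightarrow> convex_set_vars (A \<inter> B)"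
  unfolding convex_set_vars_def by blast

lemma convex_set_vars_INT:
  assumes "\<And>i. i \<in> I \<Longrightarrow> convex_set_vars (A i)"
  shows "convex_set_vars (\<Inter>i\<in>I. A i)"
  unfolding convex_set_vars_def
proof (intro ballI allI impI INT_I)
  fix x y and t :: real and i
  assume "x \<in> (\<Inter>i\<in>I. A i)" "y \<in> (\<Inter>i\<in>I. A i)" "0 \<le> t \<and> t \<le> 1" "i \<in> I"
  then show "vcomb t x y \<in> A i"
    using assms[of i] unfolding convex_set_vars_def by blast
qed

lemma convex_fun_vars_Prout:
  assumes "0 \<le> m"
    and "\<And>i j. i \<in> {1..M} \<Longrightarrow> j \<in> {1..N} \<Longrightarrow> 0 \<le> c i j"
    and "\<And>j. j \<in> {1..N} \<Longrightarrow> 0 \<le> cr j"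
  shows "convex_fun_vars (\<lambda>(pt, pr, E). Prout M N m c cr pt pr k)"
  by (rule convex_fun_varsI, simp only: vcomb_def prod.case)
     (intro log_convex_on_imp_convex_on log_convex_on_Prout concave_on_interpolation
        convex_real_interval assms)

lemma convex_fun_vars_exp_user_power: "convex_fun_vars (\<lambda>(pt, pr, E). exp (pt i k))"
  and convex_fun_vars_exp_relay_power: "convex_fun_vars (\<lambda>(pt, pr, E). exp (pr j k))"
  by (rule convex_fun_varsI, simp only: vcomb_def prod.case,
      intro log_convex_on_imp_convex_on log_convex_on_exp convex_on_interpolation
        convex_real_interval)+

lemma convex_fun_vars_neg_transfer: "convex_fun_vars (\<lambda>(pt, pr, E). - E i i' k)"
  by (rule convex_fun_varsI, simp only: vcomb_def prod.case)
     (intro concave_on_interpolation[unfolded concave_on_def] convex_real_interval)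

definition net_energy_use ::
    "nat \<Rightarrow> real \<Rightarrow> real \<Rightarrow> (nat \<Rightarrow> nat \<Rightarrow> real) \<Rightarrow> (nat \<Rightarrow> nat \<Rightarrow> nat \<Rightarrow> real) \<Rightarrow> nat \<Rightarrow> nat \<Rightarrow> real"
  where
  "net_energy_use M T \<eta> pt E i k =
     (\<Sum>l=1..k. T * exp (pt i l)) + (\<Sum>l=1..k. \<Sum>i'\<in>{1..M} - {i}. E i i' l)
       - \<eta> * (\<Sum>l=1..k. \<Sum>i'\<in>{1..M} - {i}. E i' i l)"

lemma convex_fun_vars_net_energy_use:
  assumes "0 \<le> T" "0 \<le> \<eta>"
  shows "convex_fun_vars (\<lambda>(pt, pr, E). net_energy_use M T \<eta> pt E i k)"
  \<comment> \<open>the interpolation rules come first, else \<open>convex_on_add\<close> splits \<open>(1 - t) * a + t * b\<close>\<close>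
  by (rule convex_fun_varsI, simp only: vcomb_def prod.case net_energy_use_def)
     (intro convex_on_interpolation concave_on_interpolation convex_on_diff convex_on_add
        convex_on_sum_fun convex_on_cmul concave_on_cmul concave_on_sum_fun
        log_convex_on_imp_convex_on log_convex_on_exp convex_real_interval assms)

lemma convex_fun_vars_Vobj:
  assumes "0 \<le> T" "0 \<le> \<alpha>0" "\<eta> \<le> 1" "0 \<le> m" "0 \<le> q"
    and "\<And>i j. i \<in> {1..M} \<Longrightarrow> j \<in> {1..N} \<Longrightarrow> 0 \<le> c i j"
    and "\<And>j. j \<in> {1..N} \<Longrightarrow> 0 \<le> cr j"
  shows "convex_fun_vars (Vobj M N K T \<alpha>0 \<eta> m q c cr)"
  by (rule convex_fun_varsI, simp only: vcomb_def prod.case Vobj_def)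
     (intro convex_on_interpolation concave_on_interpolation convex_on_add convex_on_sum_fun
        convex_on_cmul log_convex_on_imp_convex_on log_convex_on_Prout log_convex_on_exp
        convex_real_interval mult_nonneg_nonneg of_nat_0_le_iff assms, use assms in auto)

lemma feasible_eq_sublevel_sets:
  "feasible M N K T \<eta> m pmax Pr0 c cr Eu =
     (\<Inter>k\<in>{1..K}.
        {v. (\<lambda>(pt, pr, E). Prout M N m c cr pt pr k) v \<le> Pr0}
      \<inter> (\<Inter>i\<in>{1..M}. {v. (\<lambda>(pt, pr, E). net_energy_use M T \<eta> pt E i k) v \<le> (\<Sum>l=1..k. Eu i l)})
      \<inter> (\<Inter>i\<in>{1..M}. {v. (\<lambda>(pt, pr, E). exp (pt i k)) v \<le> pmax})
      \<inter> (\<Inter>j\<in>{1..N}. {v. (\<lambda>(pt, pr, E). exp (pr j k)) v \<le> pmax})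
      \<inter> (\<Inter>i\<in>{1..M}. \<Inter>i'\<in>{1..M} - {i}. {v. (\<lambda>(pt, pr, E). - E i i' k) v \<le> 0}))"
  by (auto simp: feasible_def net_energy_use_def)

theorem proposition2:
  fixes M N K :: nat
    and T \<alpha>0 \<eta> m pmax Pr0 q :: real
    and c :: "nat \<Rightarrow> nat \<Rightarrow> real" and cr :: "nat \<Rightarrow> real" and Eu :: "nat \<Rightarrow> nat \<Rightarrow> real"
  assumes "0 < M" "M \<le> N" "0 < K"
    and "0 < T" "0 < \<alpha>0" "0 < \<eta>" "\<eta> \<le> 1" "0 < m" "0 < pmax" "0 < Pr0" "0 \<le> q"
    and "\<And>i j. i \<in> {1..M} \<Longrightarrow> j \<in> {1..N} \<Longrightarrow> 0 < c i j"
    and "\<And>j. j \<in> {1..N} \<Longrightarrow> 0 < cr j"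
    and "\<And>i k. i \<in> {1..M} \<Longrightarrow> k \<in> {1..K} \<Longrightarrow> 0 \<le> Eu i k"
  shows "convex_fun_vars (Vobj M N K T \<alpha>0 \<eta> m q c cr)
       \<and> convex_set_vars (feasible M N K T \<eta> m pmax Pr0 c cr Eu)"
proof
  show "convex_fun_vars (Vobj M N K T \<alpha>0 \<eta> m q c cr)"
    using assms by (intro convex_fun_vars_Vobj) (auto intro: less_imp_le)
  show "convex_set_vars (feasible M N K T \<eta> m pmax Pr0 c cr Eu)"
    unfolding feasible_eq_sublevel_sets
    using assms
    by (intro convex_set_vars_INT convex_set_vars_Int convex_set_vars_sublevel
          convex_fun_vars_Prout convex_fun_vars_net_energy_use convex_fun_vars_exp_user_power
          convex_fun_vars_exp_relay_power convex_fun_vars_neg_transfer)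
       (auto intro: less_imp_le)
qed

end
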